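(* In the setting of the context (FSR scheme with direct flux reconstruction), let $\mathcal{E}_j=(\Phi_{j+1/2}-\Phi_{j-1/2})/h$ evaluated on exact nodal values. If $\kappa_3=\kappa-1$, $\theta=1/3$ and $\theta_3=0$, then as $h\to0$, with derivatives at $x_j$, $$\mathcal{E}_j=\frac{\partial f}{\partial x}-\frac1{30}\frac{\partial^5 f}{\partial x^5}h^4+\frac{\kappa-1}{32}\left[\frac{\partial D}{\partial x}\frac{\partial^5 u}{\partial x^5}+D(u(x_j))\frac{\partial^6 u}{\partial x^6}\right]h^5+O(h^6),$$ where $f$ denotes $f(u(x))$ and $\partial D/\partial x=\frac{d}{dx}D(u(x))$ (fourth-order accuracy).
   Context: Let $h>0$, uniform grid $x_i=ih$, $i\in\mathbb{Z}$. Let $u$ be a smooth real function of $x$, $u_i=u(x_i)$; let $f$ (flux) and $D$ (dissipation coefficient) be smooth real functions of one variable; $f_i=f(u_i)$. For nodal values $g_i$ define successive central differences $(g_x)_i=(g_{i+1}-g_{i-1})/(2h)$, $(g_{xx})_i=((g_x)_{i+1}-(g_x)_{i-1})/(2h)$, and for the face $i+1/2$ with $j=i$, $k=i+1$, define $T_j[g]=\frac h4((g_x)_k-(g_x)_j)-\frac{h^2}{4}(g_{xx})_j$, $T_k[g]=\frac h4((g_x)_k-(g_x)_j)-\frac{h^2}{4}(g_{xx})_k$. Reconstructed solution states (parameters $\kappa,\kappa_3$): $u_L=\kappa\frac{u_j+u_k}{2}+(1-\kappa)[u_j+\frac h2(u_x)_j]+\kappa_3T_j[u]$, $u_R=\kappa\frac{u_j+u_k}{2}+(1-\kappa)[u_k-\frac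 h2(u_x)_k]+\kappa_3T_k[u]$. Reconstructed fluxes (parameters $\theta,\theta_3$): $f_L=\theta\frac{f_j+f_k}{2}+(1-\theta)[f_j+\frac h2(f_x)_j]+\theta_3T_j[f]$, $f_R=\theta\frac{f_j+f_k}{2}+(1-\theta)[f_k-\frac h2(f_x)_k]+\theta_3T_k[f]$. Numerical flux: $\Phi_{i+1/2}=\frac12(f_L+f_R)-\frac12D_{i+1/2}(u_R-u_L)$, with $D_{i+1/2}=\bar D(u_i,u_{i+1})$ for a smooth symmetric $\bar D$ with $\bar D(v,v)=D(v)$. *)

theory Defs
  imports "HOL-Analysis.Analysis" "HOL-Library.Landau_Symbols"
begin

definition smooth1 :: "(real \<Rightarrow> real) \<Rightarrow> bool" where
  "smooth1 g \<longleftrightarrow> (\<forall>n x. ((deriv ^^ n) g) differentiable (at x))"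

definition pd1 :: "(real \<Rightarrow> real \<Rightarrow> real) \<Rightarrow> real \<Rightarrow> real \<Rightarrow> real" where
  "pd1 g = (\<lambda>a b. deriv (\<lambda>s. g s b) a)"
definition pd2 :: "(real \<Rightarrow> real \<Rightarrow> real) \<Rightarrow> real \<Rightarrow> real \<Rightarrow> real" where
  "pd2 g = (\<lambda>a b. deriv (\<lambda>t. g a t) b)"

definition iter_pd :: "bool list \<Rightarrow> (real \<Rightarrow> real \<Rightarrow> real) \<Rightarrow> real \<Rightarrow> real \<Rightarrow> real" where
  "iter_pd ds g = fold (\<lambda>d h. if d then pd1 h else pd2 h) ds g"

definition smooth2 :: "(real \<Rightarrow> real \<Rightarrow> real) \<Rightarrow> bool" where
  "smooth2 g \<longleftrightarrow> (\<forall>ds. continuous_on UNIV (\<lambda>p. iter_pd ds g (fst p) (snd p)) \<and>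
       (\<forall>a b. (\<lambda>s. iter_pd ds g s b) differentiable (at a) \<and>
              (\<lambda>t. iter_pd ds g a t) differentiable (at b)))"

definition cx :: "real \<Rightarrow> (int \<Rightarrow> real) \<Rightarrow> int \<Rightarrow> real" where
  "cx h g i = (g (i+1) - g (i-1)) / (2*h)"
definition cxx :: "real \<Rightarrow> (int \<Rightarrow> real) \<Rightarrow> int \<Rightarrow> real" where
  "cxx h g i = (cx h g (i+1) - cx h g (i-1)) / (2*h)"

text \<open>Third-order correction terms at face i+1/2 (j = i, k = i+1).\<close>
definition Tj :: "real \<Rightarrow> (int \<Rightarrow> real) \<Rightarrow> int \<Rightarrow> real" where
  "Tj h g i = h/4 * (cx h g (i+1) - cx h g i) - h^2/4 * cxx h g i"
definition Tk :: "real \<Rightarrow> (int \<Rightarrow> real) \<Rightarrow> int \<Rightarrow> real" where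
  "Tk h g i = h/4 * (cx h g (i+1) - cx h g i) - h^2/4 * cxx h g (i+1)"

definition recL :: "real \<Rightarrow> real \<Rightarrow> real \<Rightarrow> (int \<Rightarrow> real) \<Rightarrow> int \<Rightarrow> real" where
  "recL k k3 h g i = k * (g i + g (i+1)) / 2 + (1 - k) * (g i + h/2 * cx h g i) + k3 * Tj h g i"
definition recR :: "real \<Rightarrow> real \<Rightarrow> real \<Rightarrow> (int \<Rightarrow> real) \<Rightarrow> int \<Rightarrow> real" where
  "recR k k3 h g i = k * (g i + g (i+1)) / 2 + (1 - k) * (g (i+1) - h/2 * cx h g (i+1)) + k3 * Tk h g i"

definition numflux ::
  "real \<Rightarrow> real \<Rightarrow> real \<Rightarrow> real \<Rightarrow> (real \<Rightarrow> real) \<Rightarrow> (real \<Rightarrow> real \<Rightarrow> real)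
     \<Rightarrow> real \<Rightarrow> (int \<Rightarrow> real) \<Rightarrow> int \<Rightarrow> real" where
  "numflux \<kappa> \<kappa>3 \<theta> \<theta>3 f Dbar h v i =
     (recL \<theta> \<theta>3 h (f \<circ> v) i + recR \<theta> \<theta>3 h (f \<circ> v) i) / 2
     - Dbar (v i) (v (i+1)) / 2 * (recR \<kappa> \<kappa>3 h v i - recL \<kappa> \<kappa>3 h v i)"

definition fsr_E ::
  "real \<Rightarrow> real \<Rightarrow> real \<Rightarrow> real \<Rightarrow> (real \<Rightarrow> real) \<Rightarrow> (real \<Rightarrow> real \<Rightarrow> real)
     \<Rightarrow> (real \<Rightarrow> real) \<Rightarrow> real \<Rightarrow> real \<Rightarrow> real" where
  "fsr_E \<kappa> \<kappa>3 \<theta> \<theta>3 f Dbar u x h =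
     (let v = (\<lambda>i::int. u (x + of_int i * h)) in
      (numflux \<kappa> \<kappa>3 \<theta> \<theta>3 f Dbar h v 0 - numflux \<kappa> \<kappa>3 \<theta> \<theta>3 f Dbar h v (-1)) / h)"

end

(*
  With kappa3 = kappa - 1, theta = 1/3 and theta3 = 0 the numerical flux collapses to two
  finite-difference stencils: the difference of the averaged reconstructed fluxes is the
  classical fourth-order central difference of f(u), and the jump u_R - u_L at the face
  i + 1/2 is (1 - kappa)/16 times the fifth difference of u over the nodes i-2 .. i+3.
  Taylor expansion gives h (f o u)' - h^5 (f o u)^(5)/30 + O(h^7) for the former and
  h^5 u^(5) +- h^6 u^(6)/2 + O(h^7) for the two fifth differences at the faces j +- 1/2.
  The dissipation coefficients are Dbar(u_j, u_(j+-1)) = D(u_j) +- h psi' + O(h^2) with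
  psi(t) = Dbar(u(x_j), u(t)), and symmetry of Dbar gives (D o u)' = 2 psi'. Hence the
  dissipative fluxes differ by h^6 ((D o u)' u^(5) + D(u) u^(6)) (1 - kappa)/32 + O(h^7),
  and dividing by h yields the expansion.
*)
theory Submission
  imports Defs
begin

lemma real_differentiable_iff_field_differentiable:
  "(g :: real \<Rightarrow> real) differentiable (at x) \<longleftrightarrow> g field_differentiable (at x)"
  by (metis DERIV_deriv_iff_real_differentiable DERIV_deriv_iff_field_differentiable)

text \<open>\<open>differentiable_upto n g\<close> says that \<open>g\<close> is \<open>n + 1\<close> times differentiable on all of \<open>\<real>\<close>.\<close>

definition differentiable_upto :: "nat \<Rightarrow> (real \<Rightarrow> real) \<Rightarrow> bool" where
  "differentiable_upto n g \<longleftrightarrow> (\<forall>m\<le>n. \<forall>x. (deriv ^^ m) g differentiable (at x))"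

lemma differentiable_upto_0: "differentiable_upto 0 g \<longleftrightarrow> (\<forall>x. g differentiable (at x))"
  by (simp add: differentiable_upto_def)

lemma differentiable_upto_Suc:
  "differentiable_upto (Suc n) g \<longleftrightarrow> (\<forall>x. g differentiable (at x)) \<and> differentiable_upto n (deriv g)"
proof -
  have "(deriv ^^ Suc m) g = (deriv ^^ m) (deriv g)" for m
    by (simp add: funpow_Suc_right del: funpow.simps)
  then show ?thesis
    unfolding differentiable_upto_def
    by (metis Suc_le_mono funpow_0 id_apply le0 not0_implies_Suc)
qed

lemma differentiable_upto_mono: "differentiable_upto n g \<Longrightarrow> m \<le> n \<Longrightarrow> differentiable_upto m g"
  by (simp add: differentiable_upto_def)

lemma differentiable_upto_differentiable: "differentiable_upto n g \<Longrightarrow> g differentiable (at x)"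
  by (metis differentiable_upto_def funpow_0 le0)

lemma smooth1_differentiable_upto: "smooth1 g \<Longrightarrow> differentiable_upto n g"
  by (simp add: differentiable_upto_def smooth1_def)

lemma differentiable_upto_add:
  "differentiable_upto n g \<Longrightarrow> differentiable_upto n h \<Longrightarrow> differentiable_upto n (\<lambda>x. g x + h x)"
proof (induction n arbitrary: g h)
  case 0
  then show ?case by (simp add: differentiable_upto_0)
next
  case (Suc n)
  then have "deriv (\<lambda>x. g x + h x) = (\<lambda>x. deriv g x + deriv h x)"
    by (auto simp: differentiable_upto_Suc real_differentiable_iff_field_differentiable)
  with Suc show ?case by (simp add: differentiable_upto_Suc)
qed

lemma differentiable_upto_mult:
  "differentiable_upto n g \<Longrightarrow> differentiable_upto n h \<Longrightarrow> differentiable_upto n (\<lambda>x. g x * h x)"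
proof (induction n arbitrary: g h)
  case 0
  then show ?case by (simp add: differentiable_upto_0)
next
  case (Suc n)
  then have "deriv (\<lambda>x. g x * h x) = (\<lambda>x. g x * deriv h x + deriv g x * h x)"
    by (auto simp: differentiable_upto_Suc real_differentiable_iff_field_differentiable)
  moreover have "differentiable_upto n (\<lambda>x. g x * deriv h x + deriv g x * h x)"
    using Suc.prems differentiable_upto_mono[OF Suc.prems(1)] differentiable_upto_mono[OF Suc.prems(2)]
    by (intro differentiable_upto_add Suc.IH) (simp_all add: differentiable_upto_Suc)
  ultimately show ?case
    using Suc.prems by (simp add: differentiable_upto_Suc)
qed

lemma differentiable_upto_comp:
  "differentiable_upto n g \<Longrightarrow> differentiable_upto n h \<Longrightarrow> differentiable_upto n (g \<circ> h)"
proof (induction n arbitrary: g h)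
  case 0
  then show ?case by (metis differentiable_upto_0 differentiable_chain_at)
next
  case (Suc n)
  have g: "\<forall>x. g differentiable (at x)" and h: "\<forall>x. h differentiable (at x)"
    using Suc.prems by (simp_all add: differentiable_upto_Suc)
  then have "deriv (g \<circ> h) = (\<lambda>x. (deriv g \<circ> h) x * deriv h x)"
    by (simp add: fun_eq_iff real_derivative_chain)
  moreover have "differentiable_upto n (\<lambda>x. (deriv g \<circ> h) x * deriv h x)"
    using Suc.prems differentiable_upto_mono[OF Suc.prems(2)]
    by (intro differentiable_upto_mult Suc.IH) (simp_all add: differentiable_upto_Suc)
  moreover have "\<forall>x. (g \<circ> h) differentiable (at x)"
    using g h differentiable_chain_at by blast
  ultimately show ?case by (simp add: differentiable_upto_Suc comp_def)
qed

lemma iter_pd_snoc: "iter_pd (ds @ [d]) g = (if d then pd1 (iter_pd ds g) else pd2 (iter_pd ds g))"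
  by (simp add: iter_pd_def)

lemma higher_deriv_eq_iter_pd2: "(deriv ^^ n) (G a) = iter_pd (replicate n False) G a"
proof (induction n)
  case 0
  then show ?case by (simp add: iter_pd_def)
next
  case (Suc n)
  have "(deriv ^^ Suc n) (G a) = iter_pd (replicate n False @ [False]) G a"
    by (simp add: Suc iter_pd_snoc pd2_def)
  then show ?case by (simp add: replicate_append_same)
qed

lemma smooth2_differentiable_upto: "smooth2 G \<Longrightarrow> differentiable_upto n (G a)"
  unfolding differentiable_upto_def smooth2_def higher_deriv_eq_iter_pd2 by blast

lemma smooth2_partial_derivs:
  assumes "smooth2 G"
  shows "(G a has_real_derivative pd2 G a b) (at b)"
    and "((\<lambda>s. G s b) has_real_derivative pd1 G a b) (at a)"
    and "continuous_on UNIV (\<lambda>p. pd2 G (fst p) (snd p))"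
proof -
  have "iter_pd [] G = G" "iter_pd [False] G = pd2 G"
    by (simp_all add: iter_pd_def)
  with assms have "G a differentiable (at b)" "(\<lambda>s. G s b) differentiable (at a)"
    and "continuous_on UNIV (\<lambda>p. pd2 G (fst p) (snd p))"
    unfolding smooth2_def by metis+
  then show "(G a has_real_derivative pd2 G a b) (at b)"
    and "((\<lambda>s. G s b) has_real_derivative pd1 G a b) (at a)"
    and "continuous_on UNIV (\<lambda>p. pd2 G (fst p) (snd p))"
    by (simp_all add: pd1_def pd2_def DERIV_deriv_iff_real_differentiable)
qed

lemma smooth2_has_derivative:
  assumes "smooth2 G"
  shows "((\<lambda>(s, t). G s t) has_derivative (\<lambda>(ds, dt). pd1 G a b * ds + pd2 G a b * dt)) (at (a, b))"
proof -
  have "continuous (at (a, b)) (\<lambda>p. blinfun_mult_right (pd2 G (fst p) (snd p)))"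
    using smooth2_partial_derivs(3)[OF assms]
    by (intro bounded_linear.continuous[OF bounded_linear_blinfun_mult_right])
      (simp add: continuous_on_eq_continuous_at)
  then have "continuous (at (a, b) within UNIV \<times> UNIV) (\<lambda>(s, t). blinfun_mult_right (pd2 G s t))"
    by (simp add: case_prod_unfold)
  then have "((\<lambda>(s, t). G s t) has_derivative
      (\<lambda>(ds, dt). pd1 G a b * ds + blinfun_mult_right (pd2 G a b) dt)) (at (a, b) within UNIV \<times> UNIV)"
    using smooth2_partial_derivs(1,2)[OF assms]
    by (intro has_derivative_partialsI) (auto simp: has_field_derivative_def)
  then show ?thesis by (simp add: mult.commute)
qed

lemma smooth2_symmetric_diagonal_deriv:
  assumes "smooth2 G" and "\<And>s t. G s t = G t s"
  shows "((\<lambda>t. G t t) has_real_derivative 2 * pd2 G a a) (at a)"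
proof -
  have "pd1 G a a = pd2 G a a"
    unfolding pd1_def pd2_def by (subst assms(2)) (rule refl)
  then have "(\<lambda>d. pd1 G a a * d + pd2 G a a * d) = (*) (2 * pd2 G a a)"
    by (simp add: fun_eq_iff algebra_simps)
  moreover have "((\<lambda>(s, t). G s t) \<circ> (\<lambda>t. (t, t)) has_derivative
      (\<lambda>(ds, dt). pd1 G a a * ds + pd2 G a a * dt) \<circ> (\<lambda>t. (t, t))) (at a)"
    by (intro diff_chain_at smooth2_has_derivative[OF assms(1)] derivative_eq_intros) auto
  ultimately show ?thesis
    by (simp add: has_field_derivative_def o_def)
qed

lemma deriv_symmetric_diagonal_comp:
  assumes "smooth2 G" and "\<And>s t. G s t = G t s" and "u differentiable (at x)"
  shows "deriv (\<lambda>t. G (u t) (u t)) x = 2 * deriv (\<lambda>t. G (u x) (u t)) x"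
proof -
  have "deriv ((\<lambda>s. G s s) \<circ> u) x = 2 * pd2 G (u x) (u x) * deriv u x"
    using smooth2_symmetric_diagonal_deriv[OF assms(1,2)] assms(3)
    by (metis DERIV_imp_deriv real_derivative_chain real_differentiable_def)
  moreover have "deriv (G (u x) \<circ> u) x = pd2 G (u x) (u x) * deriv u x"
    using smooth2_partial_derivs(1)[OF assms(1)] assms(3)
    by (metis DERIV_imp_deriv real_derivative_chain real_differentiable_def)
  ultimately show ?thesis by (simp add: o_def)
qed

lemma taylor_remainder_bound:
  assumes "differentiable_upto n g" and "0 < n"
  obtains M where "\<And>y. \<bar>y - x\<bar> \<le> r \<Longrightarrow>
    \<bar>g y - (\<Sum>m<n. (deriv ^^ m) g x / fact m * (y - x) ^ m)\<bar> \<le> M * \<bar>y - x\<bar> ^ n"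
proof -
  have "continuous_on {x - r..x + r} ((deriv ^^ n) g)"
    using assms(1) unfolding differentiable_upto_def
    by (meson differentiable_at_imp_differentiable_on differentiable_imp_continuous_on order_refl)
  then obtain M where M: "\<And>t. t \<in> {x - r..x + r} \<Longrightarrow> \<bar>(deriv ^^ n) g t\<bar> \<le> M"
    using compact_continuous_image[OF _ compact_Icc] compact_imp_bounded bounded_iff
    by (metis image_eqI real_norm_def)
  have "\<bar>g y - (\<Sum>m<n. (deriv ^^ m) g x / fact m * (y - x) ^ m)\<bar> \<le> M / fact n * \<bar>y - x\<bar> ^ n"
    if y: "\<bar>y - x\<bar> \<le> r" for y
  proof (cases "y = x")
    case True
    with assms(2) show ?thesis by (cases n) (simp_all add: sum.lessThan_Suc_shift)
  next
    case False
    have "\<forall>m t. m < n \<and> x - r \<le> t \<and> t \<le> x + r \<longrightarrow>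
        DERIV ((deriv ^^ m) g) t :> (deriv ^^ Suc m) g t"
      using assms(1) unfolding differentiable_upto_def
      by (simp add: DERIV_deriv_iff_real_differentiable)
    then have "\<exists>t. (if y < x then y < t \<and> t < x else x < t \<and> t < y) \<and>
        g y = (\<Sum>m<n. (deriv ^^ m) g x / fact m * (y - x) ^ m) + (deriv ^^ n) g t / fact n * (y - x) ^ n"
      using assms(2) y False by (intro Taylor[where a = "x - r" and b = "x + r"]) auto
    then obtain t where t: "if y < x then y < t \<and> t < x else x < t \<and> t < y"
      and taylor: "g y = (\<Sum>m<n. (deriv ^^ m) g x / fact m * (y - x) ^ m)
                      + (deriv ^^ n) g t / fact n * (y - x) ^ n"
      by blast
    from t y have "t \<in> {x - r..x + r}" by (auto split: if_splits)
    then show ?thesis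
      unfolding taylor using M
      by (simp add: abs_mult power_abs divide_right_mono mult_right_mono)
  qed
  then show thesis by (rule that)
qed

lemma eventually_at_right_0_lt_1: "eventually (\<lambda>h::real. 0 < h \<and> h < 1) (at_right 0)"
  using eventually_at_right_less order_tendstoD(2)[OF tendsto_ident_at zero_less_one]
  by (rule eventually_conj)

lemma taylor_bigo:
  assumes "differentiable_upto n g" and "0 < n"
  shows "(\<lambda>h. g (x + c * h) - (\<Sum>m<n. (deriv ^^ m) g x / fact m * (c * h) ^ m))
    \<in> O[at_right 0](\<lambda>h. h ^ n)"
proof -
  obtain M where M: "\<And>y. \<bar>y - x\<bar> \<le> \<bar>c\<bar> \<Longrightarrow>
      \<bar>g y - (\<Sum>m<n. (deriv ^^ m) g x / fact m * (y - x) ^ m)\<bar> \<le> M * \<bar>y - x\<bar> ^ n"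
    using taylor_remainder_bound[OF assms] by blast
  have "eventually (\<lambda>h. norm (g (x + c * h) - (\<Sum>m<n. (deriv ^^ m) g x / fact m * (c * h) ^ m))
      \<le> M * \<bar>c\<bar> ^ n * norm (h ^ n)) (at_right 0)"
    using eventually_at_right_0_lt_1
  proof eventually_elim
    case (elim h)
    then have "\<bar>c * h\<bar> \<le> \<bar>c\<bar>"
      by (simp add: abs_mult mult_left_le)
    then show ?case
      using M[of "x + c * h"] by (simp add: abs_mult power_abs power_mult_distrib mult.assoc)
  qed
  then show ?thesis by (rule bigoI)
qed

lemma bigo_power_mono: "m \<le> n \<Longrightarrow> (\<lambda>h::real. h ^ n) \<in> O[at_right 0](\<lambda>h. h ^ m)"
  by (intro bigoI[where c = 1] eventually_mono[OF eventually_at_right_0_lt_1])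
    (simp add: power_decreasing)

lemma bigo_power_trans:
  "f \<in> O[at_right 0](\<lambda>h. h ^ n) \<Longrightarrow> m \<le> n \<Longrightarrow> f \<in> O[at_right 0](\<lambda>h::real. h ^ m)"
  using landau_o.big_trans bigo_power_mono by blast

lemma bigo_divide_power:
  assumes "f \<in> O[at_right 0](\<lambda>h. h ^ Suc n)"
  shows "(\<lambda>h. f h / h) \<in> O[at_right 0](\<lambda>h::real. h ^ n)"
proof -
  have "eventually (\<lambda>h::real. h \<noteq> 0) (at_right 0)"
    using eventually_at_right_less by (rule eventually_mono) simp
  with assms show ?thesis
    by (simp add: landau_o.big.divide_eq2 mult.commute)
qed

lemma bigo_mult_expansions:
  assumes "(\<lambda>h. f h - p h) \<in> O[at_right 0](\<lambda>h. h ^ a)" and "(\<lambda>h. g h - q h) \<in> O[at_right 0](\<lambda>h. h ^ b)"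
    and "p \<in> O[at_right 0](\<lambda>h. h ^ c)" and "q \<in> O[at_right 0](\<lambda>h. h ^ d)"
    and "N \<le> a + d" and "N \<le> c + b" and "N \<le> a + b"
  shows "(\<lambda>h. f h * g h - p h * q h) \<in> O[at_right 0](\<lambda>h::real. h ^ N)"
proof -
  have "(\<lambda>h. (f h - p h) * q h) \<in> O[at_right 0](\<lambda>h. h ^ (a + d))"
    using landau_o.big.mult[OF assms(1,4)] by (simp add: power_add)
  moreover have "(\<lambda>h. p h * (g h - q h)) \<in> O[at_right 0](\<lambda>h. h ^ (c + b))"
    using landau_o.big.mult[OF assms(3,2)] by (simp add: power_add)
  moreover have "(\<lambda>h. (f h - p h) * (g h - q h)) \<in> O[at_right 0](\<lambda>h. h ^ (a + b))"
    using landau_o.big.mult[OF assms(1,2)] by (simp add: power_add)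
  ultimately have "(\<lambda>h. (f h - p h) * q h + p h * (g h - q h) + (f h - p h) * (g h - q h))
      \<in> O[at_right 0](\<lambda>h. h ^ N)"
    using assms(5-7) by (intro sum_in_bigo(1)) (auto elim: bigo_power_trans)
  then show ?thesis by (simp add: algebra_simps)
qed

definition stencil :: "(real \<times> real) list \<Rightarrow> (real \<Rightarrow> real) \<Rightarrow> real \<Rightarrow> real \<Rightarrow> real" where
  "stencil st g x h = (\<Sum>(a, c)\<leftarrow>st. a * g (x + c * h))"

definition stencil_moment :: "(real \<times> real) list \<Rightarrow> nat \<Rightarrow> real" where
  "stencil_moment st m = (\<Sum>(a, c)\<leftarrow>st. a * c ^ m)"

lemma stencil_taylor_bigo:
  assumes "differentiable_upto n g" and "0 < n"
  shows "(\<lambda>h. stencil st g x h - (\<Sum>m<n. (deriv ^^ m) g x / fact m * stencil_moment st m * h ^ m))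
    \<in> O[at_right 0](\<lambda>h. h ^ n)"
proof (induction st)
  case Nil
  then show ?case by (simp add: stencil_def stencil_moment_def)
next
  case (Cons ac st)
  obtain a c where ac: "ac = (a, c)" by fastforce
  have "stencil (ac # st) g x h - (\<Sum>m<n. (deriv ^^ m) g x / fact m * stencil_moment (ac # st) m * h ^ m)
      = a * (g (x + c * h) - (\<Sum>m<n. (deriv ^^ m) g x / fact m * (c * h) ^ m))
        + (stencil st g x h - (\<Sum>m<n. (deriv ^^ m) g x / fact m * stencil_moment st m * h ^ m))" for h
    by (simp add: ac stencil_def stencil_moment_def algebra_simps power_mult_distrib
        sum.distrib sum_distrib_left sum_subtractf)
  with taylor_bigo[OF assms, of x c] Cons.IH show ?case
    by (simp add: sum_in_bigo(1))
qed

definition central_diff4 :: "(real \<times> real) list" where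
  "central_diff4 = [(1/12, -2), (-2/3, -1), (2/3, 1), (-1/12, 2)]"

definition fifth_diff :: "real \<Rightarrow> (real \<times> real) list" where
  "fifth_diff s = [(-1, s - 2), (5, s - 1), (-10, s), (10, s + 1), (-5, s + 2), (1, s + 3)]"

lemma sum_lessThan_7:
  fixes F :: "nat \<Rightarrow> real"
  shows "(\<Sum>m<7. F m) = F 0 + F 1 + F 2 + F 3 + F 4 + F 5 + F 6"
  by (simp add: numeral_eq_Suc)

lemma stencil_central_diff4:
  assumes "differentiable_upto 7 g"
  shows "(\<lambda>h. stencil central_diff4 g x h - (deriv g x * h - (deriv ^^ 5) g x / 30 * h ^ 5))
    \<in> O[at_right 0](\<lambda>h. h ^ 7)"
proof -
  have "(\<Sum>m<7. (deriv ^^ m) g x / fact m * stencil_moment central_diff4 m * h ^ m)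
      = deriv g x * h - (deriv ^^ 5) g x / 30 * h ^ 5" for h
    by (simp add: sum_lessThan_7 stencil_moment_def central_diff4_def fact_numeral)
  with stencil_taylor_bigo[OF assms, of central_diff4 x] show ?thesis by simp
qed

lemma stencil_fifth_diff:
  assumes "differentiable_upto 7 g"
  shows "(\<lambda>h. stencil (fifth_diff s) g x h
      - ((deriv ^^ 5) g x * h ^ 5 + (2 * s + 1) / 2 * (deriv ^^ 6) g x * h ^ 6))
    \<in> O[at_right 0](\<lambda>h. h ^ 7)"
proof -
  \<comment> \<open>The moments of order below 5 vanish; those of order 5 and 6 are \<open>5!\<close> and \<open>6! (s + 1/2)\<close>.\<close>
  have "(\<Sum>m<7. (deriv ^^ m) g x / fact m * stencil_moment (fifth_diff s) m * h ^ m)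
      = (deriv ^^ 5) g x * h ^ 5 + (2 * s + 1) / 2 * (deriv ^^ 6) g x * h ^ 6" for h
    by (simp add: sum_lessThan_7 stencil_moment_def fifth_diff_def fact_numeral)
      (simp add: algebra_simps power_numeral_reduce)
  with stencil_taylor_bigo[OF assms, of "fifth_diff s" x] show ?thesis by simp
qed

lemma bigo_power_combination:
  "(\<lambda>h. a * h ^ n + b * h ^ Suc n) \<in> O[at_right 0](\<lambda>h::real. h ^ n)"
  using bigo_power_mono[of n "Suc n"] by (intro sum_in_bigo(1)) simp_all

lemma numflux_eq:
  assumes "h \<noteq> 0"
  shows "numflux \<kappa> (\<kappa> - 1) (1/3) 0 f Dbar h v i =
    (f (v i) + f (v (i + 1))) / 2 - (f (v (i + 2)) - f (v (i + 1)) - f (v i) + f (v (i - 1))) / 12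
    - Dbar (v i) (v (i + 1)) / 2 * (1 - \<kappa>) *
      ((- v (i - 2) + 5 * v (i - 1) - 10 * v i + 10 * v (i + 1) - 5 * v (i + 2) + v (i + 3)) / 16)"
proof -
  have idx: "i + 1 + 1 = i + 2" "i + 1 - 1 = i" "i - 1 + 1 = i" "i - 1 - 1 = i - 2" "i + 2 + 1 = i + 3"
    "i + 1 + 1 + 1 = i + 3" "i + 1 + 1 - 1 = i + 1" "i + 1 - 1 + 1 = i + 1" "i - 1 + 1 + 1 = i + 1"
    "i + 1 - 1 - 1 = i - 1" "i - 1 + 1 - 1 = i - 1" "i - 1 - 1 + 1 = i - 1"
    by simp_all
  show ?thesis
    unfolding numflux_def recL_def recR_def Tj_def Tk_def cxx_def cx_def o_def idx
    using assms by (simp add: field_simps power2_eq_square)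
qed

lemma fsr_E_eq_stencils:
  assumes "h \<noteq> 0"
  shows "fsr_E \<kappa> (\<kappa> - 1) (1/3) 0 f Dbar u x h =
    (stencil central_diff4 (f \<circ> u) x h
     - (1 - \<kappa>) / 32 * (Dbar (u x) (u (x + h)) * stencil (fifth_diff 0) u x h
                       - Dbar (u (x - h)) (u x) * stencil (fifth_diff (-1)) u x h)) / h"
  unfolding fsr_E_def Let_def numflux_eq[OF assms] stencil_def central_diff4_def fifth_diff_def
  by simp (simp add: field_simps)

lemma dissipation_expansion:
  assumes u: "differentiable_upto 7 u" and G: "smooth2 G" and sym: "\<And>s t. G s t = G t s"
  shows "(\<lambda>h. G (u x) (u (x + h)) * stencil (fifth_diff 0) u x h
              - G (u (x - h)) (u x) * stencil (fifth_diff (-1)) u x h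
              - (deriv (\<lambda>t. G (u t) (u t)) x * (deriv ^^ 5) u x + G (u x) (u x) * (deriv ^^ 6) u x) * h ^ 6)
    \<in> O[at_right 0](\<lambda>h. h ^ 7)"
proof -
  define \<psi> where "\<psi> = G (u x) \<circ> u"
  define p1 where "p1 = deriv \<psi> x"
  define w5 where "w5 = (deriv ^^ 5) u x"
  define w6 where "w6 = (deriv ^^ 6) u x"
  have "differentiable_upto 2 \<psi>"
    unfolding \<psi>_def using differentiable_upto_mono[OF u]
    by (intro differentiable_upto_comp smooth2_differentiable_upto[OF G]) simp
  then have "(\<lambda>h. \<psi> (x + c * h) - (\<psi> x + p1 * c * h)) \<in> O[at_right 0](\<lambda>h. h ^ 2)" for c
    using taylor_bigo[of 2 \<psi> x c] by (simp add: p1_def numeral_2_eq_2 mult.assoc)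
  from this[of 1] this[of "-1"]
  have B0: "(\<lambda>h. G (u x) (u (x + h)) - (G (u x) (u x) + p1 * h)) \<in> O[at_right 0](\<lambda>h. h ^ 2)"
    and B1: "(\<lambda>h. G (u (x - h)) (u x) - (G (u x) (u x) - p1 * h)) \<in> O[at_right 0](\<lambda>h. h ^ 2)"
    by (simp_all add: \<psi>_def sym[of "u (x - _)"])
  have W0: "(\<lambda>h. stencil (fifth_diff 0) u x h - (w5 * h ^ 5 + w6 / 2 * h ^ 6)) \<in> O[at_right 0](\<lambda>h. h ^ 7)"
    and W1: "(\<lambda>h. stencil (fifth_diff (-1)) u x h - (w5 * h ^ 5 - w6 / 2 * h ^ 6)) \<in> O[at_right 0](\<lambda>h. h ^ 7)"
    using stencil_fifth_diff[OF u, of 0 x] stencil_fifth_diff[OF u, of "-1" x] by (simp_all add: w5_def w6_def)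
  have P0: "(\<lambda>h. G (u x) (u x) + p1 * h) \<in> O[at_right 0](\<lambda>h. h ^ 0)"
    and P1: "(\<lambda>h. G (u x) (u x) - p1 * h) \<in> O[at_right 0](\<lambda>h. h ^ 0)"
    using bigo_power_combination[of "G (u x) (u x)" 0 p1] bigo_power_combination[of "G (u x) (u x)" 0 "-p1"]
    by simp_all
  have Q0: "(\<lambda>h. w5 * h ^ 5 + w6 / 2 * h ^ 6) \<in> O[at_right 0](\<lambda>h. h ^ 5)"
    and Q1: "(\<lambda>h. w5 * h ^ 5 - w6 / 2 * h ^ 6) \<in> O[at_right 0](\<lambda>h. h ^ 5)"
    using bigo_power_combination[of w5 5 "w6 / 2"] bigo_power_combination[of w5 5 "- w6 / 2"]
    by (simp_all add: eval_nat_numeral)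
  have E0: "(\<lambda>h. G (u x) (u (x + h)) * stencil (fifth_diff 0) u x h
              - (G (u x) (u x) + p1 * h) * (w5 * h ^ 5 + w6 / 2 * h ^ 6)) \<in> O[at_right 0](\<lambda>h. h ^ 7)"
    using bigo_mult_expansions[OF B0 W0 P0 Q0] by simp
  have E1: "(\<lambda>h. G (u (x - h)) (u x) * stencil (fifth_diff (-1)) u x h
              - (G (u x) (u x) - p1 * h) * (w5 * h ^ 5 - w6 / 2 * h ^ 6)) \<in> O[at_right 0](\<lambda>h. h ^ 7)"
    using bigo_mult_expansions[OF B1 W1 P1 Q1] by simp
  have "deriv (\<lambda>t. G (u t) (u t)) x = 2 * p1"
    unfolding p1_def \<psi>_def o_def
    by (intro deriv_symmetric_diagonal_comp G sym differentiable_upto_differentiable[OF u])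
  then have "(G (u x) (u x) + p1 * h) * (w5 * h ^ 5 + w6 / 2 * h ^ 6)
      - (G (u x) (u x) - p1 * h) * (w5 * h ^ 5 - w6 / 2 * h ^ 6)
      = (deriv (\<lambda>t. G (u t) (u t)) x * w5 + G (u x) (u x) * w6) * h ^ 6" for h
    by (simp add: field_simps eval_nat_numeral)
  with sum_in_bigo(2)[OF E0 E1] show ?thesis
    by (simp add: w5_def w6_def algebra_simps)
qed

lemma fsr_E_expansion:
  assumes u: "differentiable_upto 7 u" and fu: "differentiable_upto 7 (f \<circ> u)"
    and G: "smooth2 G" and sym: "\<And>s t. G s t = G t s"
  shows "(\<lambda>h. fsr_E \<kappa> (\<kappa> - 1) (1/3) 0 f G u x h
           - (deriv (f \<circ> u) x - 1/30 * (deriv ^^ 5) (f \<circ> u) x * h ^ 4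
              + (\<kappa> - 1)/32 * (deriv (\<lambda>t. G (u t) (u t)) x * (deriv ^^ 5) u x
                               + G (u x) (u x) * (deriv ^^ 6) u x) * h ^ 5))
    \<in> O[at_right 0](\<lambda>h. h ^ 6)"
proof -
  define T where "T h = deriv (f \<circ> u) x - 1/30 * (deriv ^^ 5) (f \<circ> u) x * h ^ 4
    + (\<kappa> - 1)/32 * (deriv (\<lambda>t. G (u t) (u t)) x * (deriv ^^ 5) u x
                     + G (u x) (u x) * (deriv ^^ 6) u x) * h ^ 5" for h
  define N where "N h = stencil central_diff4 (f \<circ> u) x h
     - (1 - \<kappa>) / 32 * (G (u x) (u (x + h)) * stencil (fifth_diff 0) u x h
                       - G (u (x - h)) (u x) * stencil (fifth_diff (-1)) u x h)" for h
  have W: "(\<lambda>h. (1 - \<kappa>) / 32 * (G (u x) (u (x + h)) * stencil (fifth_diff 0) u x h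
              - G (u (x - h)) (u x) * stencil (fifth_diff (-1)) u x h
              - (deriv (\<lambda>t. G (u t) (u t)) x * (deriv ^^ 5) u x + G (u x) (u x) * (deriv ^^ 6) u x) * h ^ 6))
    \<in> O[at_right 0](\<lambda>h. h ^ 7)"
    using dissipation_expansion[OF u G sym, of x] by simp
  have "N h - h * T h = stencil central_diff4 (f \<circ> u) x h
      - (deriv (f \<circ> u) x * h - (deriv ^^ 5) (f \<circ> u) x / 30 * h ^ 5)
      - (1 - \<kappa>) / 32 * (G (u x) (u (x + h)) * stencil (fifth_diff 0) u x h
              - G (u (x - h)) (u x) * stencil (fifth_diff (-1)) u x h
              - (deriv (\<lambda>t. G (u t) (u t)) x * (deriv ^^ 5) u x + G (u x) (u x) * (deriv ^^ 6) u x) * h ^ 6)"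
    for h
    by (simp add: N_def T_def field_simps eval_nat_numeral)
  with sum_in_bigo(2)[OF stencil_central_diff4[OF fu, of x] W]
  have "(\<lambda>h. N h - h * T h) \<in> O[at_right 0](\<lambda>h. h ^ Suc 6)"
    by simp
  then have "(\<lambda>h. (N h - h * T h) / h) \<in> O[at_right 0](\<lambda>h. h ^ 6)"
    by (rule bigo_divide_power)
  moreover have "eventually (\<lambda>h. (N h - h * T h) / h = fsr_E \<kappa> (\<kappa> - 1) (1/3) 0 f G u x h - T h) (at_right 0)"
    using eventually_at_right_less
    by eventually_elim (simp add: fsr_E_eq_stencils N_def diff_divide_distrib)
  ultimately show ?thesis
    unfolding T_def by (rule landau_o.big.in_cong[THEN iffD1, rotated])
qed

theorem mainTheorem3:
  fixes u f D :: "real \<Rightarrow> real" and Dbar :: "real \<Rightarrow> real \<Rightarrow> real"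
    and \<kappa> \<kappa>3 \<theta> \<theta>3 x :: real
  assumes "smooth1 u" and "smooth1 f" and "smooth1 D" and "smooth2 Dbar"
    and "\<And>a b. Dbar a b = Dbar b a" and "\<And>v. Dbar v v = D v"
    and "\<kappa>3 = \<kappa> - 1" and "\<theta> = 1/3" and "\<theta>3 = 0"
  shows "(\<lambda>h. fsr_E \<kappa> \<kappa>3 \<theta> \<theta>3 f Dbar u x h
           - (deriv (f \<circ> u) x
              - 1/30 * (deriv ^^ 5) (f \<circ> u) x * h^4
              + (\<kappa> - 1)/32 * (deriv (D \<circ> u) x * (deriv ^^ 5) u x
                               + D (u x) * (deriv ^^ 6) u x) * h^5))
         \<in> O[at_right 0](\<lambda>h. h^6)"
proof -
  have u: "differentiable_upto 7 u" and fu: "differentiable_upto 7 (f \<circ> u)"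
    using assms(1,2) by (simp_all add: smooth1_differentiable_upto differentiable_upto_comp)
  from fsr_E_expansion[OF u fu assms(4,5), of \<kappa> x] show ?thesis
    unfolding assms(7-9) by (simp add: assms(6) comp_def)
qed

end
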